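(* For all $\beta,c\ge0$ and all $N_1,N_2\in\mathbb N$, $$p_{N_1+N_2}(\beta,c)\ge\frac{N_1}{N_1+N_2}p_{N_1}(\beta,c)+\frac{N_2}{N_1+N_2}p_{N_2}(\beta,c).$$
   Context: Fix an integer $q\ge2$, $[q]=\{1,\dots,q\}$. For $\sigma\in[q]^N$ and a real $N\times N$ matrix $J$, $H_N(\sigma,J)=\sum_{i,j=1}^N J_{ij}\delta(\sigma_i,\sigma_j)$ ($\delta$ the Kronecker delta) and $Z_N(J)=\sum_{\sigma\in[q]^N}e^{-H_N(\sigma,J)}$. For $c\ge0$, $\mathbb P_{N,c}$ is the law of a random $N\times N$ matrix $J$ with independent entries $J_{ij}$ ($1\le i,j\le N$) each Poisson with mean $c/(2N)$, with expectation $\mathbb E_{N,c}$; $p_N(\beta,c)=\mathbb E_{N,c}[N^{-1}\ln Z_N(\beta J)]$. *)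

theory Defs
  imports "HOL-Probability.Probability"
begin

definition poisson_mean :: "real \<Rightarrow> nat pmf" where
  "poisson_mean lam = (if lam = 0 then return_pmf 0 else poisson_pmf lam)"

definition configs :: "nat \<Rightarrow> nat \<Rightarrow> (nat \<Rightarrow> nat) set" where
  "configs q N = PiE {1..N} (\<lambda>_. {1..q})"

definition potts_H :: "nat \<Rightarrow> (nat \<Rightarrow> nat) \<Rightarrow> (nat \<times> nat \<Rightarrow> real) \<Rightarrow> real" where
  "potts_H N \<sigma> J = (\<Sum>i\<in>{1..N}. \<Sum>j\<in>{1..N}. J (i, j) * (if \<sigma> i = \<sigma> j then 1 else 0))"

definition partition_Z :: "nat \<Rightarrow> nat \<Rightarrow> (nat \<times> nat \<Rightarrow> real) \<Rightarrow> real" where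
  "partition_Z q N J = (\<Sum>\<sigma>\<in>configs q N. exp (- potts_H N \<sigma> J))"

text \<open>Law P_{N,c}: independent Poisson(c/(2N)) entries J_ij, 1 \<le> i,j \<le> N
  (entries outside the index range are fixed to 0).\<close>
definition J_law :: "nat \<Rightarrow> real \<Rightarrow> (nat \<times> nat \<Rightarrow> nat) pmf" where
  "J_law N c = Pi_pmf ({1..N} \<times> {1..N}) 0 (\<lambda>_. poisson_mean (c / (2 * real N)))"

definition pressure :: "nat \<Rightarrow> nat \<Rightarrow> real \<Rightarrow> real \<Rightarrow> real" where
  "pressure q N \<beta> c = measure_pmf.expectation (J_law N c)
      (\<lambda>J. ln (partition_Z q N (\<lambda>ij. \<beta> * real (J ij))) / real N)"

end

theory Submission
  imports Defs
begin

(*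
  Compare the system on N1 + N2 sites, whose pairs carry independent Poisson edges of rate
  c/(2(N1 + N2)), with the decoupled one in which pairs inside {1..N1} carry rate c/(2 N1),
  pairs inside {N1+1..N1+N2} carry rate c/(2 N2) and mixed pairs carry none.  Both families of
  rates have the same total, and the log-partition function of the decoupled system splits into
  the two smaller ones.  Grouping a Poisson expectation by the total number M of edges writes it
  as a series whose M-th term sums over the ways of adding M edges one at a time; replacing the
  rates one step at a time reduces the comparison to a single added edge.  Adding the edge (i,j)
  changes ln Z by ln (1 - (1 - e^-beta) x_ij), where x_ij is the Gibbs probability that sites i
  and j agree.  Expanding the logarithm, it suffices that the rate difference integrates every
  power of x nonnegatively.  Such powers are averages of agreement kernels of replicated
  colourings, and for one colouring the inequality is (s + t)^2/(N1 + N2) <= s^2/N1 + t^2/N2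
  for the numbers s, t of sites of a given colour in the two blocks.
*)

no_notation Infinite_Sum.abs_summable_on (infixr \<open>abs'_summable'_on\<close> 46)

section \<open>Poisson fields and sums over edge additions\<close>

definition add_one :: "('a \<Rightarrow> nat) \<Rightarrow> 'a \<Rightarrow> 'a \<Rightarrow> nat" where
  "add_one G p = G(p := G p + 1)"

lemma add_one_commute: "add_one (add_one G p) r = add_one (add_one G r) p"
  by (auto simp: add_one_def fun_eq_iff)

lemma sum_add_one:
  assumes "finite P" "p \<in> P"
  shows "(\<Sum>r\<in>P. add_one G p r) = Suc (\<Sum>r\<in>P. G r)"
proof -
  have "(\<Sum>r\<in>P. add_one G p r) = (\<Sum>r\<in>P. G r + of_bool (r = p))"
    by (intro sum.cong) (auto simp: add_one_def)
  then show ?thesis using assms by (simp add: sum.distrib)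
qed

text \<open>\<open>extension_sum w P M f G\<close> is the sum, over all sequences \<open>p\<^sub>1, \<dots>, p\<^sub>M\<close> in \<open>P\<close>, of
  \<open>w p\<^sub>1 \<cdots> w p\<^sub>M \<cdot> f (G + e\<^sub>p\<^sub>1 + \<dots> + e\<^sub>p\<^sub>M)\<close>; up to the factor \<open>e\<^sup>-\<^sup>W/M!\<close> it is the \<open>M\<close>-th term of a Poisson expectation.\<close>
fun extension_sum ::
  "('a \<Rightarrow> real) \<Rightarrow> 'a set \<Rightarrow> nat \<Rightarrow> (('a \<Rightarrow> nat) \<Rightarrow> real) \<Rightarrow> ('a \<Rightarrow> nat) \<Rightarrow> real" where
  "extension_sum w P 0 f G = f G"
| "extension_sum w P (Suc M) f G = (\<Sum>p\<in>P. w p * extension_sum w P M f (add_one G p))"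

lemma extension_sum_const: "extension_sum w P M (\<lambda>_. 1) G = (\<Sum>p\<in>P. w p) ^ M"
  by (induction M arbitrary: G) (simp_all add: sum_distrib_right)

lemma extension_sum_mono:
  assumes "\<And>G. f G \<le> g G" and "\<And>p. p \<in> P \<Longrightarrow> w p \<ge> 0"
  shows "extension_sum w P M f G \<le> extension_sum w P M g G"
  by (induction M arbitrary: G) (use assms in \<open>auto intro!: sum_mono mult_left_mono\<close>)

lemma extension_sum_last_step:
  "(\<Sum>p\<in>P. v p * extension_sum w P M f (add_one G p))
     = extension_sum w P M (\<lambda>G'. \<Sum>p\<in>P. v p * f (add_one G' p)) G"
proof (induction M arbitrary: G)
  case 0
  show ?case by simp
next
  case (Suc M)
  have "(\<Sum>p\<in>P. v p * extension_sum w P (Suc M) f (add_one G p))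
      = (\<Sum>p\<in>P. \<Sum>r\<in>P. w r * (v p * extension_sum w P M f (add_one (add_one G r) p)))"
    by (simp add: sum_distrib_left add_one_commute algebra_simps)
  also have "\<dots> = (\<Sum>r\<in>P. w r * (\<Sum>p\<in>P. v p * extension_sum w P M f (add_one (add_one G r) p)))"
    by (subst sum.swap) (simp add: sum_distrib_left)
  also have "\<dots> = extension_sum w P (Suc M) (\<lambda>G'. \<Sum>p\<in>P. v p * f (add_one G' p)) G"
    by (simp add: Suc.IH)
  finally show ?case .
qed

text \<open>A hybrid argument: replace the weights \<open>k\<close> by \<open>l\<close> one step at a time, starting from the last.\<close>
lemma extension_sum_compare:
  assumes step: "\<And>G. (\<Sum>p\<in>P. k p * f (add_one G p)) \<le> (\<Sum>p\<in>P. l p * f (add_one G p))"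
    and k: "\<And>p. p \<in> P \<Longrightarrow> k p \<ge> 0" and l: "\<And>p. p \<in> P \<Longrightarrow> l p \<ge> 0"
  shows "extension_sum k P M f G \<le> extension_sum l P M f G"
proof (induction M arbitrary: G)
  case 0
  show ?case by simp
next
  case (Suc M)
  have "extension_sum k P (Suc M) f G = extension_sum k P M (\<lambda>G'. \<Sum>p\<in>P. k p * f (add_one G' p)) G"
    by (simp add: extension_sum_last_step)
  also have "\<dots> \<le> extension_sum k P M (\<lambda>G'. \<Sum>p\<in>P. l p * f (add_one G' p)) G"
    by (intro extension_sum_mono step k)
  also have "\<dots> = (\<Sum>p\<in>P. l p * extension_sum k P M f (add_one G p))"
    by (simp add: extension_sum_last_step)
  also have "\<dots> \<le> extension_sum l P (Suc M) f G"
    using Suc l by (auto intro!: sum_mono mult_left_mono)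
  finally show ?case .
qed

definition compositions :: "'a set \<Rightarrow> nat \<Rightarrow> ('a \<Rightarrow> nat) set" where
  "compositions P M = {n. (\<forall>p. p \<notin> P \<longrightarrow> n p = 0) \<and> (\<Sum>p\<in>P. n p) = M}"

definition poisson_weight :: "'a set \<Rightarrow> ('a \<Rightarrow> real) \<Rightarrow> ('a \<Rightarrow> nat) \<Rightarrow> real" where
  "poisson_weight P w n = (\<Prod>p\<in>P. w p ^ n p / fact (n p))"

lemma finite_compositions:
  assumes "finite P"
  shows "finite (compositions P M)"
proof (rule finite_subset)
  show "compositions P M \<subseteq> {n. \<forall>x. (x \<in> P \<longrightarrow> n x \<in> {..M}) \<and> (x \<notin> P \<longrightarrow> n x = 0)}"
    unfolding compositions_def using assms by (auto simp: member_le_sum)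
  show "finite {n. \<forall>x. (x \<in> P \<longrightarrow> n x \<in> {..M}) \<and> (x \<notin> P \<longrightarrow> n x = 0)}"
    by (intro finite_set_of_finite_funs assms) auto
qed

lemma compositions_0: "finite P \<Longrightarrow> compositions P 0 = {\<lambda>_. 0}"
  by (auto simp: compositions_def fun_eq_iff)

lemma bij_betw_add_one_compositions:
  assumes "finite P" "p \<in> P"
  shows "bij_betw (\<lambda>n. add_one n p) (compositions P M) {n \<in> compositions P (Suc M). n p \<ge> 1}"
proof (rule bij_betw_byWitness[where f' = "\<lambda>n. n(p := n p - 1)"])
  show "(\<lambda>n. n(p := n p - 1)) ` {n \<in> compositions P (Suc M). n p \<ge> 1} \<subseteq> compositions P M"
  proof clarify
    fix n assume n: "n \<in> compositions P (Suc M)" "n p \<ge> 1"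
    have "add_one (n(p := n p - 1)) p = n" using n by (auto simp: add_one_def fun_eq_iff)
    then have "Suc (\<Sum>r\<in>P. (n(p := n p - 1)) r) = Suc M"
      using sum_add_one[OF assms, of "n(p := n p - 1)"] n by (simp add: compositions_def)
    then show "n(p := n p - 1) \<in> compositions P M" using n assms by (auto simp: compositions_def)
  qed
  show "(\<lambda>n. add_one n p) ` compositions P M \<subseteq> {n \<in> compositions P (Suc M). n p \<ge> 1}"
    using assms by (auto simp: compositions_def sum_add_one) (auto simp: add_one_def)
qed (auto simp: add_one_def fun_eq_iff)

lemma poisson_weight_add_one:
  assumes "finite P" "p \<in> P"
  shows "real (n p + 1) * poisson_weight P w (add_one n p) = w p * poisson_weight P w n"
proof -
  let ?rest = "\<Prod>r\<in>P-{p}. w r ^ n r / fact (n r)"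
  have "poisson_weight P w (add_one n p) = w p ^ (n p + 1) / fact (n p + 1) * ?rest"
    unfolding poisson_weight_def using assms
    by (subst prod.remove[of P p]) (auto simp: add_one_def intro!: prod.cong)
  moreover have "poisson_weight P w n = w p ^ n p / fact (n p) * ?rest"
    unfolding poisson_weight_def using assms by (subst prod.remove[of P p]) auto
  ultimately show ?thesis by (simp add: fact_Suc del: of_nat_Suc)
qed

lemma extension_sum_eq_compositions:
  assumes "finite P"
  shows "extension_sum w P M f G
       = fact M * (\<Sum>n\<in>compositions P M. poisson_weight P w n * f (\<lambda>x. G x + n x))"
proof (induction M arbitrary: G)
  case 0
  show ?case by (simp add: compositions_0[OF assms] poisson_weight_def)
next
  case (Suc M)
  let ?h = "\<lambda>n. poisson_weight P w n * f (\<lambda>x. G x + n x)"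
  have step: "w p * (\<Sum>n\<in>compositions P M. poisson_weight P w n * f (\<lambda>x. add_one G p x + n x))
      = (\<Sum>n\<in>compositions P (Suc M). real (n p) * ?h n)" if p: "p \<in> P" for p
  proof -
    have "w p * (\<Sum>n\<in>compositions P M. poisson_weight P w n * f (\<lambda>x. add_one G p x + n x))
        = (\<Sum>n\<in>compositions P M. real (add_one n p p) * ?h (add_one n p))"
      unfolding sum_distrib_left
    proof (intro sum.cong refl)
      fix n
      have "(\<lambda>x. add_one G p x + n x) = (\<lambda>x. G x + add_one n p x)" by (auto simp: add_one_def)
      then show "w p * (poisson_weight P w n * f (\<lambda>x. add_one G p x + n x))
          = real (add_one n p p) * ?h (add_one n p)"
        using poisson_weight_add_one[OF assms p, of n w] by (simp add: add_one_def)
    qed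
    also have "\<dots> = (\<Sum>n\<in>{n \<in> compositions P (Suc M). n p \<ge> 1}. real (n p) * ?h n)"
      by (rule sum.reindex_bij_betw[OF bij_betw_add_one_compositions[OF assms p]])
    also have "\<dots> = (\<Sum>n\<in>compositions P (Suc M). real (n p) * ?h n)"
      by (intro sum.mono_neutral_left finite_compositions assms) auto
    finally show ?thesis .
  qed
  have "extension_sum w P (Suc M) f G
      = fact M * (\<Sum>p\<in>P. w p * (\<Sum>n\<in>compositions P M. poisson_weight P w n * f (\<lambda>x. add_one G p x + n x)))"
    by (simp add: Suc.IH sum_distrib_left algebra_simps)
  also have "\<dots> = fact M * (\<Sum>p\<in>P. \<Sum>n\<in>compositions P (Suc M). real (n p) * ?h n)"
    using step by simp
  also have "\<dots> = fact M * (\<Sum>n\<in>compositions P (Suc M). real (\<Sum>p\<in>P. n p) * ?h n)"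
    by (subst sum.swap) (simp add: of_nat_sum sum_distrib_right)
  also have "\<dots> = fact M * (\<Sum>n\<in>compositions P (Suc M). real (Suc M) * ?h n)"
    by (intro arg_cong2[where f="(*)"] sum.cong refl) (auto simp: compositions_def)
  also have "\<dots> = fact (Suc M) * (\<Sum>n\<in>compositions P (Suc M). ?h n)"
    by (simp add: sum_distrib_left algebra_simps)
  finally show ?case .
qed

lemma sum_poisson_weight_compositions:
  "finite P \<Longrightarrow> (\<Sum>n\<in>compositions P M. poisson_weight P w n) = (\<Sum>p\<in>P. w p) ^ M / fact M"
  using extension_sum_eq_compositions[of P w M "\<lambda>_. 1" "\<lambda>_. 0"] extension_sum_const[of w P M]
  by (simp add: field_simps)

definition poisson_field :: "'a set \<Rightarrow> ('a \<Rightarrow> real) \<Rightarrow> ('a \<Rightarrow> nat) pmf" where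
  "poisson_field P w = Pi_pmf P 0 (\<lambda>p. poisson_mean (w p))"

definition supported_on :: "'a set \<Rightarrow> ('a \<Rightarrow> nat) set" where
  "supported_on P = {n. \<forall>x. x \<notin> P \<longrightarrow> n x = 0}"

lemma pmf_poisson_mean: "w \<ge> 0 \<Longrightarrow> pmf (poisson_mean w) k = w ^ k / fact k * exp (- w)"
  by (cases "w = 0") (auto simp: poisson_mean_def indicator_def)

lemma pmf_poisson_field:
  assumes "finite P" "\<And>p. p \<in> P \<Longrightarrow> w p \<ge> 0"
  shows "pmf (poisson_field P w) n
       = (if n \<in> supported_on P then exp (- (\<Sum>p\<in>P. w p)) * poisson_weight P w n else 0)"
proof -
  have "(\<Prod>p\<in>P. pmf (poisson_mean (w p)) (n p)) = (\<Prod>p\<in>P. w p ^ n p / fact (n p) * exp (- w p))"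
    using assms by (intro prod.cong) (auto simp: pmf_poisson_mean)
  also have "\<dots> = exp (- (\<Sum>p\<in>P. w p)) * poisson_weight P w n"
    unfolding poisson_weight_def prod.distrib using assms by (simp add: exp_sum[symmetric] sum_negf)
  finally show ?thesis
    using assms by (auto simp: poisson_field_def pmf_Pi supported_on_def)
qed

lemma bij_betw_snd_compositions: "bij_betw snd (Sigma UNIV (compositions P)) (supported_on P)"
  unfolding bij_betw_def inj_on_def by (auto simp: compositions_def supported_on_def image_iff)

context
  fixes P :: "'a set" and w :: "'a \<Rightarrow> real"
  assumes finite_P: "finite P" and w_nonneg: "\<And>p. p \<in> P \<Longrightarrow> w p \<ge> 0"
begin

lemma poisson_field_layer:
  "(\<Sum>n\<in>compositions P M. pmf (poisson_field P w) n * f n)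
     = exp (- (\<Sum>p\<in>P. w p)) / fact M * extension_sum w P M f (\<lambda>_. 0)"
proof -
  have "(\<Sum>n\<in>compositions P M. pmf (poisson_field P w) n * f n)
      = exp (- (\<Sum>p\<in>P. w p)) * (\<Sum>n\<in>compositions P M. poisson_weight P w n * f n)"
    unfolding sum_distrib_left
    by (intro sum.cong)
       (auto simp: pmf_poisson_field[OF finite_P w_nonneg] compositions_def supported_on_def)
  then show ?thesis
    by (simp add: extension_sum_eq_compositions[OF finite_P])
qed

context
  fixes f :: "('a \<Rightarrow> nat) \<Rightarrow> real" and A B :: real
  assumes A_nonneg: "A \<ge> 0" and B_nonneg: "B \<ge> 0"
    and growth: "\<And>n. n \<in> supported_on P \<Longrightarrow> \<bar>f n\<bar> \<le> A + B * real (\<Sum>p\<in>P. n p)"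
begin

lemma poisson_field_layer_abs_le:
  "(\<Sum>n\<in>compositions P M. \<bar>pmf (poisson_field P w) n * f n\<bar>)
     \<le> exp (- (\<Sum>p\<in>P. w p)) * (A + B) * ((2 * (\<Sum>p\<in>P. w p)) ^ M / fact M)"
proof -
  define W where "W = (\<Sum>p\<in>P. w p)"
  have weight_nonneg: "poisson_weight P w n \<ge> 0" for n
    unfolding poisson_weight_def using w_nonneg by (intro prod_nonneg) auto
  have "(\<Sum>n\<in>compositions P M. \<bar>pmf (poisson_field P w) n * f n\<bar>)
      \<le> (\<Sum>n\<in>compositions P M. exp (- W) * (A + B * real M) * poisson_weight P w n)"
  proof (intro sum_mono)
    fix n assume n: "n \<in> compositions P M"
    then have supp: "n \<in> supported_on P" and total: "(\<Sum>p\<in>P. n p) = M"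
      by (auto simp: compositions_def supported_on_def)
    have "\<bar>f n\<bar> \<le> A + B * real M" using growth[OF supp] unfolding total .
    moreover have "pmf (poisson_field P w) n = exp (- W) * poisson_weight P w n"
      using supp by (simp add: pmf_poisson_field[OF finite_P w_nonneg] W_def)
    ultimately show "\<bar>pmf (poisson_field P w) n * f n\<bar> \<le> exp (- W) * (A + B * real M) * poisson_weight P w n"
      using weight_nonneg[of n] by (simp add: abs_mult) (metis mult.commute mult_right_mono)
  qed
  also have "\<dots> = exp (- W) * (A + B * real M) * (W ^ M / fact M)"
    by (simp add: sum_distrib_left[symmetric] sum_poisson_weight_compositions[OF finite_P] W_def)
  also have "\<dots> \<le> exp (- W) * ((A + B) * 2 ^ M) * (W ^ M / fact M)"
  proof -
    have "real M \<le> 2 ^ M"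
      using less_exp[of M] by (simp add: of_nat_less_iff[symmetric])
    then have "A + B * real M \<le> (A + B) * 2 ^ M"
      using A_nonneg B_nonneg mult_left_mono[of 1 "2 ^ M" A] mult_left_mono[of "real M" "2 ^ M" B]
      by (simp add: distrib_right)
    moreover have "W \<ge> 0" unfolding W_def using w_nonneg by (simp add: sum_nonneg)
    ultimately show ?thesis by (intro mult_right_mono mult_left_mono) auto
  qed
  finally show ?thesis by (simp add: W_def power_mult_distrib)
qed

lemma abs_summable_poisson_field_layers:
  "(\<lambda>z. pmf (poisson_field P w) (snd z) * f (snd z)) abs_summable_on Sigma UNIV (compositions P)"
proof -
  define W where "W = (\<Sum>p\<in>P. w p)"
  have fin: "finite (compositions P M)" and cnt: "countable (compositions P M)" for M
    using finite_compositions[OF finite_P] by (auto intro: countable_finite)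
  have "summable (\<lambda>M. exp (- W) * (A + B) * ((2 * W) ^ M / fact M))"
    using summable_exp[of "2*W"] by (intro summable_mult) (simp add: field_simps)
  then have "(\<lambda>M. \<Sum>\<^sub>an\<in>compositions P M. norm (pmf (poisson_field P w) n * f n)) abs_summable_on UNIV"
    unfolding abs_summable_on_nat_iff'
    by (rule summable_comparison_test[rotated], intro exI allI impI)
       (use poisson_field_layer_abs_le fin in \<open>simp add: W_def sum_nonneg\<close>)
  then show ?thesis
    by (subst abs_summable_on_Sigma_iff) (use fin cnt in auto)
qed

text \<open>Grouped by the total number \<open>M\<close> of points, the Poisson expectation is a series in
  \<open>extension_sum\<close>; linear growth of \<open>f\<close> makes it absolutely convergent.\<close>
lemma poisson_field_expectation_sums:
  shows "integrable (measure_pmf (poisson_field P w)) f"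
    and "(\<lambda>M. exp (- (\<Sum>p\<in>P. w p)) / fact M * extension_sum w P M f (\<lambda>_. 0))
           sums measure_pmf.expectation (poisson_field P w) f"
proof -
  define g where "g n = pmf (poisson_field P w) n * f n" for n
  have pmf_outside: "g n = 0" if "n \<notin> supported_on P" for n
    using that by (simp add: g_def pmf_poisson_field[OF finite_P w_nonneg])
  have fin: "finite (compositions P M)" and cnt: "countable (compositions P M)" for M
    using finite_compositions[OF finite_P] by (auto intro: countable_finite)
  have abs_Sigma: "(\<lambda>z. g (snd z)) abs_summable_on Sigma UNIV (compositions P)"
    unfolding g_def by (rule abs_summable_poisson_field_layers)
  then have abs_supported: "g abs_summable_on supported_on P"
    using abs_summable_on_reindex_bij_betw[OF bij_betw_snd_compositions, of g] by simp
  have "g abs_summable_on UNIV"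
    by (rule iffD1[OF abs_summable_on_cong_neutral abs_supported]) (auto simp: pmf_outside)
  then have "integrable (count_space UNIV) (\<lambda>x. pmf (poisson_field P w) x *\<^sub>R f x)"
    unfolding abs_summable_on_def g_def by simp
  then show "integrable (measure_pmf (poisson_field P w)) f"
    unfolding measure_pmf_eq_density by (subst integrable_density) auto
  have "measure_pmf.expectation (poisson_field P w) f = infsetsum g UNIV"
    unfolding g_def by (rule pmf_expectation_eq_infsetsum)
  also have "\<dots> = infsetsum g (supported_on P)"
    by (intro infsetsum_cong_neutral) (auto simp: pmf_outside)
  also have "\<dots> = infsetsum (\<lambda>z. g (snd z)) (Sigma UNIV (compositions P))"
    by (rule infsetsum_reindex_bij_betw[OF bij_betw_snd_compositions, symmetric])
  also have "\<dots> = infsetsum (\<lambda>M. sum g (compositions P M)) UNIV"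
    by (subst infsetsum_Sigma) (use abs_Sigma fin cnt in auto)
  finally have expectation_eq:
    "measure_pmf.expectation (poisson_field P w) f = infsetsum (\<lambda>M. sum g (compositions P M)) UNIV" .
  have "(\<lambda>M. infsetsum g (compositions P M)) abs_summable_on UNIV"
    by (rule abs_summable_on_Sigma_project1'[where f="\<lambda>M n. g n"])
       (use abs_Sigma fin cnt in \<open>auto simp: case_prod_unfold\<close>)
  then have "(\<lambda>M. sum g (compositions P M)) sums measure_pmf.expectation (poisson_field P w) f"
    unfolding expectation_eq using fin by (intro sums_infsetsum_nat') simp
  then show "(\<lambda>M. exp (- (\<Sum>p\<in>P. w p)) / fact M * extension_sum w P M f (\<lambda>_. 0))
      sums measure_pmf.expectation (poisson_field P w) f"
    by (simp add: g_def poisson_field_layer)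
qed

end

end

lemma poisson_field_expectation_le:
  assumes "finite P" and k: "\<And>p. p \<in> P \<Longrightarrow> k p \<ge> 0" and l: "\<And>p. p \<in> P \<Longrightarrow> l p \<ge> 0"
    and same_total: "(\<Sum>p\<in>P. k p) = (\<Sum>p\<in>P. l p)"
    and "A \<ge> 0" "B \<ge> 0" "\<And>n. n \<in> supported_on P \<Longrightarrow> \<bar>f n\<bar> \<le> A + B * real (\<Sum>p\<in>P. n p)"
    and step: "\<And>G. (\<Sum>p\<in>P. k p * f (add_one G p)) \<le> (\<Sum>p\<in>P. l p * f (add_one G p))"
  shows "measure_pmf.expectation (poisson_field P k) f \<le> measure_pmf.expectation (poisson_field P l) f"
proof (rule sums_le)
  show "(\<lambda>M. exp (- (\<Sum>p\<in>P. l p)) / fact M * extension_sum k P M f (\<lambda>_. 0))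
      sums measure_pmf.expectation (poisson_field P k) f"
    using poisson_field_expectation_sums(2)[of P k A B f] assms unfolding same_total by blast
  show "(\<lambda>M. exp (- (\<Sum>p\<in>P. l p)) / fact M * extension_sum l P M f (\<lambda>_. 0))
      sums measure_pmf.expectation (poisson_field P l) f"
    using poisson_field_expectation_sums(2)[of P l A B f] assms by blast
  show "exp (- (\<Sum>p\<in>P. l p)) / fact M * extension_sum k P M f (\<lambda>_. 0)
      \<le> exp (- (\<Sum>p\<in>P. l p)) / fact M * extension_sum l P M f (\<lambda>_. 0)" for M
    by (intro mult_left_mono extension_sum_compare step k l) auto
qed

section \<open>The Potts partition function\<close>

abbreviation pairs :: "nat \<Rightarrow> (nat \<times> nat) set" where
  "pairs N \<equiv> {1..N} \<times> {1..N}"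

lemma potts_H_eq_sum_pairs:
  "potts_H N \<sigma> J = (\<Sum>p\<in>pairs N. J p * of_bool (\<sigma> (fst p) = \<sigma> (snd p)))"
  by (simp add: potts_H_def sum.cartesian_product case_prod_unfold of_bool_def)

lemma potts_H_cong:
  assumes "\<And>i. i \<in> {1..N} \<Longrightarrow> \<sigma> i = \<tau> i" "\<And>p. p \<in> pairs N \<Longrightarrow> J p = K p"
  shows "potts_H N \<sigma> J = potts_H N \<tau> K"
  unfolding potts_H_eq_sum_pairs using assms by (intro sum.cong) auto

lemma potts_H_nonneg: "(\<And>p. J p \<ge> 0) \<Longrightarrow> potts_H N \<sigma> J \<ge> 0"
  unfolding potts_H_eq_sum_pairs by (intro sum_nonneg) auto

lemma finite_configs: "finite (configs q N)"
  unfolding configs_def by (intro finite_PiE) auto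

lemma configs_nonempty: "q \<ge> 1 \<Longrightarrow> configs q N \<noteq> {}"
  unfolding configs_def by (auto simp: PiE_eq_empty_iff)

lemma card_configs: "card (configs q N) = q ^ N"
  unfolding configs_def by (simp add: card_PiE)

lemma partition_Z_pos: "q \<ge> 1 \<Longrightarrow> partition_Z q N J > 0"
  unfolding partition_Z_def by (intro sum_pos finite_configs configs_nonempty) auto

lemma partition_Z_cong:
  "(\<And>p. p \<in> pairs N \<Longrightarrow> J p = K p) \<Longrightarrow> partition_Z q N J = partition_Z q N K"
  unfolding partition_Z_def by (intro sum.cong refl arg_cong[where f=exp] arg_cong[where f=uminus] potts_H_cong) auto

definition log_partition :: "nat \<Rightarrow> nat \<Rightarrow> real \<Rightarrow> (nat \<times> nat \<Rightarrow> nat) \<Rightarrow> real" where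
  "log_partition q N \<beta> G = ln (partition_Z q N (\<lambda>ij. \<beta> * real (G ij)))"

lemma pressure_eq_expectation_log_partition:
  "pressure q N \<beta> c = measure_pmf.expectation (J_law N c) (log_partition q N \<beta>) / real N"
  unfolding pressure_def log_partition_def by simp

lemma J_law_eq_poisson_field: "J_law N c = poisson_field (pairs N) (\<lambda>_. c / (2 * real N))"
  unfolding J_law_def poisson_field_def ..

definition gibbs_agree :: "nat \<Rightarrow> nat \<Rightarrow> real \<Rightarrow> (nat \<times> nat \<Rightarrow> nat) \<Rightarrow> nat \<Rightarrow> nat \<Rightarrow> real" where
  "gibbs_agree q N \<beta> G i j =
     (\<Sum>\<sigma>\<in>configs q N. exp (- potts_H N \<sigma> (\<lambda>ij. \<beta> * real (G ij))) * of_bool (\<sigma> i = \<sigma> j))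
     / partition_Z q N (\<lambda>ij. \<beta> * real (G ij))"

lemma gibbs_agree_bounds:
  assumes "q \<ge> 1"
  shows "0 \<le> gibbs_agree q N \<beta> G i j" "gibbs_agree q N \<beta> G i j \<le> 1"
proof -
  let ?Z = "partition_Z q N (\<lambda>ij. \<beta> * real (G ij))"
  let ?Y = "\<Sum>\<sigma>\<in>configs q N. exp (- potts_H N \<sigma> (\<lambda>ij. \<beta> * real (G ij))) * of_bool (\<sigma> i = \<sigma> j)"
  have "0 \<le> ?Y" "?Y \<le> ?Z"
    unfolding partition_Z_def by (auto intro!: sum_nonneg sum_mono)
  then show "0 \<le> gibbs_agree q N \<beta> G i j" "gibbs_agree q N \<beta> G i j \<le> 1"
    using partition_Z_pos[OF assms, of N "\<lambda>ij. \<beta> * real (G ij)"]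
    by (auto simp: gibbs_agree_def divide_le_eq_1)
qed

text \<open>Adding one edge \<open>p = (i, j)\<close> multiplies the Boltzmann weight by \<open>e\<^sup>-\<^sup>\<beta>\<close> exactly when
  \<open>\<sigma> i = \<sigma> j\<close>.\<close>
lemma log_partition_add_one:
  assumes "p \<in> pairs N" "q \<ge> 1" "\<beta> \<ge> 0"
  shows "log_partition q N \<beta> (add_one G p)
       = log_partition q N \<beta> G + ln (1 - (1 - exp (-\<beta>)) * gibbs_agree q N \<beta> G (fst p) (snd p))"
proof -
  let ?H = "\<lambda>\<sigma>. potts_H N \<sigma> (\<lambda>ij. \<beta> * real (G ij))"
  let ?Z = "partition_Z q N (\<lambda>ij. \<beta> * real (G ij))"
  let ?a = "1 - exp (-\<beta>)"
  let ?x = "gibbs_agree q N \<beta> G (fst p) (snd p)"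
  have H: "potts_H N \<sigma> (\<lambda>ij. \<beta> * real (add_one G p ij))
      = ?H \<sigma> + \<beta> * of_bool (\<sigma> (fst p) = \<sigma> (snd p))" for \<sigma>
  proof -
    have "(\<lambda>ij. \<beta> * real (add_one G p ij) * of_bool (\<sigma> (fst ij) = \<sigma> (snd ij)))
        = (\<lambda>ij. \<beta> * real (G ij) * of_bool (\<sigma> (fst ij) = \<sigma> (snd ij))
             + (if ij = p then \<beta> * of_bool (\<sigma> (fst p) = \<sigma> (snd p)) else 0))"
      by (auto simp: add_one_def algebra_simps fun_eq_iff)
    then show ?thesis
      unfolding potts_H_eq_sum_pairs using assms(1) by (simp only: sum.distrib) simp
  qed
  have Z_pos: "?Z > 0" using partition_Z_pos[OF assms(2)] .
  have "exp (- (?H \<sigma> + \<beta> * of_bool (\<sigma> (fst p) = \<sigma> (snd p))))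
      = exp (- ?H \<sigma>) - ?a * (exp (- ?H \<sigma>) * of_bool (\<sigma> (fst p) = \<sigma> (snd p)))" for \<sigma>
    by (auto simp: exp_diff exp_minus field_simps)
  then have "partition_Z q N (\<lambda>ij. \<beta> * real (add_one G p ij))
      = ?Z - ?a * (\<Sum>\<sigma>\<in>configs q N. exp (- ?H \<sigma>) * of_bool (\<sigma> (fst p) = \<sigma> (snd p)))"
    unfolding partition_Z_def H by (simp add: sum_subtractf sum_distrib_left)
  also have "\<dots> = ?Z * (1 - ?a * ?x)"
    using Z_pos by (simp add: gibbs_agree_def field_simps)
  finally have Z_add_one: "partition_Z q N (\<lambda>ij. \<beta> * real (add_one G p ij)) = ?Z * (1 - ?a * ?x)" .
  have "?a * ?x \<le> ?a" "?a < 1"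
    using assms(3) gibbs_agree_bounds[OF assms(2)] by (auto simp: mult_left_le)
  then have "1 - ?a * ?x > 0" by linarith
  then show ?thesis
    unfolding log_partition_def Z_add_one using Z_pos by (simp add: ln_mult)
qed

lemma abs_log_partition_le:
  assumes "q \<ge> 1" "\<beta> \<ge> 0"
  shows "\<bar>log_partition q N \<beta> G\<bar> \<le> real N * ln (real q) + \<beta> * real (\<Sum>p\<in>pairs N. G p)"
proof -
  let ?J = "\<lambda>ij. \<beta> * real (G ij)"
  let ?Z = "partition_Z q N ?J"
  have Z_pos: "?Z > 0" using partition_Z_pos[OF assms(1)] .
  have "?Z \<le> (\<Sum>\<sigma>\<in>configs q N. 1)"
    unfolding partition_Z_def using potts_H_nonneg[of ?J] assms by (intro sum_mono) auto
  then have upper: "ln ?Z \<le> real N * ln (real q)"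
    using Z_pos assms by (subst ln_realpow[symmetric]) (auto simp: card_configs)
  define \<sigma>\<^sub>0 where "\<sigma>\<^sub>0 = restrict (\<lambda>_. 1::nat) {1..N}"
  have "\<sigma>\<^sub>0 \<in> configs q N" using assms unfolding \<sigma>\<^sub>0_def configs_def by auto
  then have "exp (- potts_H N \<sigma>\<^sub>0 ?J) \<le> ?Z"
    unfolding partition_Z_def by (rule member_le_sum) (auto simp: finite_configs)
  then have "- potts_H N \<sigma>\<^sub>0 ?J \<le> ln ?Z"
    using Z_pos by (subst ln_exp[symmetric]) (rule ln_mono; simp)
  moreover have "potts_H N \<sigma>\<^sub>0 ?J \<le> \<beta> * real (\<Sum>p\<in>pairs N. G p)"
    unfolding potts_H_eq_sum_pairs of_nat_sum sum_distrib_left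
    using assms by (intro sum_mono) auto
  moreover have "real N * ln (real q) \<ge> 0" "\<beta> * real (\<Sum>p\<in>pairs N. G p) \<ge> 0"
    using assms by (auto simp: sum_nonneg)
  ultimately show ?thesis unfolding log_partition_def using upper by linarith
qed

lemma integrable_log_partition:
  assumes "q \<ge> 1" "\<beta> \<ge> 0" "c \<ge> 0"
  shows "integrable (measure_pmf (J_law N c)) (log_partition q N \<beta>)"
  unfolding J_law_eq_poisson_field
  using poisson_field_expectation_sums(1)[of "pairs N" "\<lambda>_. c / (2 * real N)" "real N * ln (real q)" \<beta>]
    abs_log_partition_le[OF assms(1,2)] assms by auto

text \<open>Pairing two colourings shows that the cone is closed under pointwise products.\<close>
inductive_set agreement_cone :: "(nat \<Rightarrow> nat \<Rightarrow> real) set" where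
  agreement: "(\<lambda>i j. of_bool (u i = (u j :: nat))) \<in> agreement_cone"
| add: "K \<in> agreement_cone \<Longrightarrow> L \<in> agreement_cone \<Longrightarrow> (\<lambda>i j. K i j + L i j) \<in> agreement_cone"
| scale: "K \<in> agreement_cone \<Longrightarrow> a \<ge> 0 \<Longrightarrow> (\<lambda>i j. a * K i j) \<in> agreement_cone"

lemma agreement_cone_zero: "(\<lambda>i j. 0) \<in> agreement_cone"
  using agreement_cone.scale[OF agreement_cone.agreement[of id], of 0] by simp

lemma agreement_cone_one: "(\<lambda>i j. 1) \<in> agreement_cone"
  using agreement_cone.agreement[of "\<lambda>_. 0"] by simp

lemma agreement_cone_sum:
  "finite S \<Longrightarrow> (\<And>s. s \<in> S \<Longrightarrow> K s \<in> agreement_cone) \<Longrightarrow> (\<lambda>i j. \<Sum>s\<in>S. K s i j) \<in> agreement_cone"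
proof (induction S rule: finite_induct)
  case empty
  then show ?case using agreement_cone_zero by simp
next
  case (insert s S)
  then show ?case using agreement_cone.add[of "K s" "\<lambda>i j. \<Sum>s\<in>S. K s i j"] by simp
qed

lemma agreement_mult_agreement_cone:
  fixes u :: "nat \<Rightarrow> nat"
  assumes "K \<in> agreement_cone"
  shows "(\<lambda>i j. of_bool (u i = u j) * K i j) \<in> agreement_cone"
  using assms
proof (induction rule: agreement_cone.induct)
  case (agreement v)
  have "(\<lambda>i j. of_bool (prod_encode (u i, v i) = prod_encode (u j, v j))) \<in> agreement_cone"
    by (rule agreement_cone.agreement)
  then show ?case by (simp add: prod_encode_eq of_bool_conj)
next
  case (add K L)
  then show ?case using agreement_cone.add by (simp add: distrib_left)
next
  case (scale K a)
  then show ?case using agreement_cone.scale[of _ a] by (simp add: mult.left_commute)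
qed

lemma agreement_cone_mult:
  assumes "K \<in> agreement_cone" "L \<in> agreement_cone"
  shows "(\<lambda>i j. K i j * L i j) \<in> agreement_cone"
  using assms
proof (induction rule: agreement_cone.induct)
  case (agreement u)
  then show ?case by (rule agreement_mult_agreement_cone)
next
  case (add K K')
  then show ?case using agreement_cone.add by (simp add: distrib_right)
next
  case (scale K a)
  then show ?case using agreement_cone.scale[of _ a] by (simp add: mult.assoc)
qed

lemma agreement_cone_power: "K \<in> agreement_cone \<Longrightarrow> (\<lambda>i j. K i j ^ n) \<in> agreement_cone"
  by (induction n) (simp_all add: agreement_cone_one agreement_cone_mult)

text \<open>The agreement probability is a Gibbs average of agreement kernels.\<close>
lemma gibbs_agree_in_agreement_cone:
  assumes "q \<ge> 1"
  shows "gibbs_agree q N \<beta> G \<in> agreement_cone"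
proof -
  let ?Z = "partition_Z q N (\<lambda>ij. \<beta> * real (G ij))"
  let ?\<mu> = "\<lambda>\<sigma>. exp (- potts_H N \<sigma> (\<lambda>ij. \<beta> * real (G ij))) / ?Z"
  have "(\<lambda>i j. \<Sum>\<sigma>\<in>configs q N. ?\<mu> \<sigma> * of_bool (\<sigma> i = \<sigma> j)) \<in> agreement_cone"
    using partition_Z_pos[OF assms, of N "\<lambda>ij. \<beta> * real (G ij)"]
    by (intro agreement_cone_sum finite_configs agreement_cone.scale agreement_cone.agreement) auto
  then show ?thesis
    unfolding gibbs_agree_def by (simp add: sum_divide_distrib)
qed

section \<open>Mean-field rates against block rates\<close>

text \<open>The interaction rates of two independent systems on \<open>{1..N1}\<close> and \<open>{N1+1..N1+N2}\<close>.\<close>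
definition split_rate :: "nat \<Rightarrow> nat \<Rightarrow> real \<Rightarrow> nat \<times> nat \<Rightarrow> real" where
  "split_rate N1 N2 c p =
     (if fst p \<le> N1 \<and> snd p \<le> N1 then c / (2 * real N1)
      else if N1 < fst p \<and> N1 < snd p then c / (2 * real N2) else 0)"

lemma split_rate_nonneg: "c \<ge> 0 \<Longrightarrow> split_rate N1 N2 c p \<ge> 0"
  by (simp add: split_rate_def)

lemma sum_split_rate_mult:
  "(\<Sum>p\<in>pairs (N1+N2). split_rate N1 N2 c p * K p)
   = c / (2 * real N1) * (\<Sum>i\<in>{1..N1}. \<Sum>j\<in>{1..N1}. K (i,j))
   + c / (2 * real N2) * (\<Sum>i\<in>{N1+1..N1+N2}. \<Sum>j\<in>{N1+1..N1+N2}. K (i,j))"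
proof -
  have split: "{1..N1+N2} = {1..N1} \<union> {N1+1..N1+N2}" and disj: "{1..N1} \<inter> {N1+1..N1+N2} = {}"
    by auto
  let ?f = "\<lambda>i j. split_rate N1 N2 c (i,j) * K (i,j)"
  have "(\<Sum>p\<in>pairs (N1+N2). split_rate N1 N2 c p * K p)
      = (\<Sum>i\<in>{1..N1}. (\<Sum>j\<in>{1..N1}. ?f i j) + (\<Sum>j\<in>{N1+1..N1+N2}. ?f i j))
      + (\<Sum>i\<in>{N1+1..N1+N2}. (\<Sum>j\<in>{1..N1}. ?f i j) + (\<Sum>j\<in>{N1+1..N1+N2}. ?f i j))"
    unfolding sum.cartesian_product' split by (simp add: sum.union_disjoint disj)
  also have "\<dots> = (\<Sum>i\<in>{1..N1}. \<Sum>j\<in>{1..N1}. c / (2 * real N1) * K (i,j))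
      + (\<Sum>i\<in>{N1+1..N1+N2}. \<Sum>j\<in>{N1+1..N1+N2}. c / (2 * real N2) * K (i,j))"
    by (intro arg_cong2[where f="(+)"] sum.cong refl) (auto simp: split_rate_def)
  finally show ?thesis by (simp add: sum_distrib_left)
qed

lemma sum_split_rate:
  "N1 \<ge> 1 \<Longrightarrow> N2 \<ge> 1 \<Longrightarrow>
   (\<Sum>p\<in>pairs (N1+N2). split_rate N1 N2 c p) = (\<Sum>p\<in>pairs (N1+N2). c / (2 * real (N1 + N2)))"
  using sum_split_rate_mult[of N1 N2 c "\<lambda>_. 1"] by (simp add: power2_eq_square field_simps)

lemma sum_sum_agreement_eq_sum_power2_card:
  assumes "finite T" "S \<subseteq> T"
  shows "(\<Sum>i\<in>S. \<Sum>j\<in>S. of_bool (u i = u j)) = (\<Sum>v\<in>u ` T. (real (card {i\<in>S. u i = v}))\<^sup>2)"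
proof -
  have fin_S: "finite S" using assms finite_subset by blast
  have "(\<Sum>i\<in>S. \<Sum>j\<in>S. of_bool (u i = u j)) = (\<Sum>i\<in>S. real (card {j\<in>S. u j = u i}))"
    using fin_S by (simp add: sum.If_cases Int_def eq_commute of_bool_def)
  also have "\<dots> = (\<Sum>v\<in>u ` T. \<Sum>i\<in>{i\<in>S. u i = v}. real (card {j\<in>S. u j = u i}))"
    by (rule sum.group[symmetric]) (use assms fin_S in auto)
  also have "\<dots> = (\<Sum>v\<in>u ` T. \<Sum>i\<in>{i\<in>S. u i = v}. real (card {j\<in>S. u j = v}))"
    by (intro sum.cong) auto
  also have "\<dots> = (\<Sum>v\<in>u ` T. (real (card {i\<in>S. u i = v}))\<^sup>2)"
    by (simp add: power2_eq_square)
  finally show ?thesis .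
qed

lemma power2_add_divide_le:
  fixes x y s t :: real
  assumes "x > 0" "y > 0"
  shows "(s + t)\<^sup>2 / (x + y) \<le> s\<^sup>2 / x + t\<^sup>2 / y"
proof -
  have "s\<^sup>2 / x + t\<^sup>2 / y - (s + t)\<^sup>2 / (x + y) = (y * s - x * t)\<^sup>2 / (x * y * (x + y))"
    using assms by (simp add: field_simps power2_eq_square)
  also have "\<dots> \<ge> 0" using assms by simp
  finally show ?thesis by simp
qed

text \<open>Counting the vertices of each colour \<open>v\<close> in the two blocks, this is
  \<open>(s + t)\<^sup>2/(N1 + N2) \<le> s\<^sup>2/N1 + t\<^sup>2/N2\<close> summed over \<open>v\<close>.\<close>
lemma sum_mean_rate_agreement_le:
  fixes u :: "nat \<Rightarrow> nat"
  assumes "N1 \<ge> 1" "N2 \<ge> 1" "c \<ge> 0"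
  shows "(\<Sum>p\<in>pairs (N1+N2). c / (2 * real (N1 + N2)) * of_bool (u (fst p) = u (snd p)))
       \<le> (\<Sum>p\<in>pairs (N1+N2). split_rate N1 N2 c p * of_bool (u (fst p) = u (snd p)))"
proof -
  let ?A = "{1..N1+N2}" and ?B1 = "{1..N1}" and ?B2 = "{N1+1..N1+N2}"
  define s where "s v = real (card {i\<in>?B1. u i = v})" for v
  define t where "t v = real (card {i\<in>?B2. u i = v})" for v
  have count_A: "real (card {i\<in>?A. u i = v}) = s v + t v" for v
  proof -
    have "{i\<in>?A. u i = v} = {i\<in>?B1. u i = v} \<union> {i\<in>?B2. u i = v}" by auto
    then show ?thesis unfolding s_def t_def by (simp add: card_Un_disjoint disjoint_iff)
  qed
  have "(\<Sum>p\<in>pairs (N1+N2). c / (2 * real (N1 + N2)) * of_bool (u (fst p) = u (snd p)))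
      = c / (2 * real (N1 + N2)) * (\<Sum>i\<in>?A. \<Sum>j\<in>?A. of_bool (u i = u j))"
    by (simp only: sum.cartesian_product' sum_distrib_left fst_conv snd_conv)
  also have "\<dots> = (\<Sum>v\<in>u ` ?A. c / (2 * real (N1 + N2)) * (s v + t v)\<^sup>2)"
    using sum_sum_agreement_eq_sum_power2_card[of ?A ?A u] count_A by (simp add: sum_distrib_left)
  also have "\<dots> \<le> (\<Sum>v\<in>u ` ?A. c / (2 * real N1) * (s v)\<^sup>2 + c / (2 * real N2) * (t v)\<^sup>2)"
  proof (rule sum_mono)
    fix v
    have "c / 2 * ((s v + t v)\<^sup>2 / (real N1 + real N2)) \<le> c / 2 * ((s v)\<^sup>2 / real N1 + (t v)\<^sup>2 / real N2)"
      using assms by (intro mult_left_mono power2_add_divide_le) auto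
    then show "c / (2 * real (N1 + N2)) * (s v + t v)\<^sup>2 \<le> c / (2 * real N1) * (s v)\<^sup>2 + c / (2 * real N2) * (t v)\<^sup>2"
      by (simp add: algebra_simps)
  qed
  also have "\<dots> = c / (2 * real N1) * (\<Sum>v\<in>u ` ?A. (s v)\<^sup>2) + c / (2 * real N2) * (\<Sum>v\<in>u ` ?A. (t v)\<^sup>2)"
    by (simp add: sum.distrib sum_distrib_left)
  also have "\<dots> = c / (2 * real N1) * (\<Sum>i\<in>?B1. \<Sum>j\<in>?B1. of_bool (u i = u j))
      + c / (2 * real N2) * (\<Sum>i\<in>?B2. \<Sum>j\<in>?B2. of_bool (u i = u j))"
    using sum_sum_agreement_eq_sum_power2_card[of ?A ?B1 u] sum_sum_agreement_eq_sum_power2_card[of ?A ?B2 u]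
    by (simp add: s_def t_def)
  also have "\<dots> = (\<Sum>p\<in>pairs (N1+N2). split_rate N1 N2 c p * of_bool (u (fst p) = u (snd p)))"
    by (simp only: sum_split_rate_mult fst_conv snd_conv)
  finally show ?thesis .
qed

lemma sum_mean_rate_le_split_rate_agreement_cone:
  assumes "K \<in> agreement_cone" "N1 \<ge> 1" "N2 \<ge> 1" "c \<ge> 0"
  shows "(\<Sum>p\<in>pairs (N1+N2). c / (2 * real (N1 + N2)) * K (fst p) (snd p))
       \<le> (\<Sum>p\<in>pairs (N1+N2). split_rate N1 N2 c p * K (fst p) (snd p))"
  using assms(1)
proof (induction rule: agreement_cone.induct)
  case (agreement u)
  then show ?case using sum_mean_rate_agreement_le[OF assms(2-4)] by simp
next
  case (add K L)
  then show ?case by (simp add: distrib_left sum.distrib add_mono)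
next
  case (scale K a)
  have "(\<Sum>p\<in>pairs (N1+N2). r p * (a * K (fst p) (snd p))) = a * (\<Sum>p\<in>pairs (N1+N2). r p * K (fst p) (snd p))"
    for r :: "nat \<times> nat \<Rightarrow> real"
    by (simp add: sum_distrib_left mult.left_commute)
  then show ?case using scale by (simp only:) (rule mult_left_mono)
qed

lemma minus_ln_one_minus_sums: "0 \<le> y \<Longrightarrow> y < 1 \<Longrightarrow> (\<lambda>n. y ^ n / real n) sums (- ln (1 - y))"
  using sums_minus[OF ln_series'[of "-y"]] by simp

lemma sum_mult_minus_ln_one_minus_nonneg:
  fixes d x :: "'a \<Rightarrow> real"
  assumes "0 \<le> a" "a < 1" and x: "\<And>p. p \<in> P \<Longrightarrow> 0 \<le> x p \<and> x p \<le> 1"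
    and moments: "\<And>n. 0 \<le> (\<Sum>p\<in>P. d p * x p ^ n)"
  shows "0 \<le> (\<Sum>p\<in>P. d p * - ln (1 - a * x p))"
proof (rule sums_le[OF _ sums_zero])
  have "0 \<le> a * x p" "a * x p < 1" if "p \<in> P" for p
    using assms x[OF that] mult_left_le[of "x p" a] by auto
  then show "(\<lambda>n. \<Sum>p\<in>P. d p * ((a * x p) ^ n / real n)) sums (\<Sum>p\<in>P. d p * - ln (1 - a * x p))"
    by (intro sums_sum sums_mult minus_ln_one_minus_sums)
  show "0 \<le> (\<Sum>p\<in>P. d p * ((a * x p) ^ n / real n))" for n
  proof -
    have "0 \<le> a ^ n / real n * (\<Sum>p\<in>P. d p * x p ^ n)"
      using assms(1) moments by simp
    also have "\<dots> = (\<Sum>p\<in>P. d p * ((a * x p) ^ n / real n))"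
      by (simp add: sum_distrib_left power_mult_distrib mult_ac)
    finally show ?thesis .
  qed
qed

text \<open>Expanding \<open>-ln (1 - (1 - e\<^sup>-\<^sup>\<beta>) x)\<close> in powers of the agreement probability \<open>x\<close>
  reduces the claim to the agreement cone.\<close>
lemma sum_split_rate_log_partition_le:
  assumes "q \<ge> 1" "\<beta> \<ge> 0" "N1 \<ge> 1" "N2 \<ge> 1" "c \<ge> 0"
  shows "(\<Sum>p\<in>pairs (N1+N2). split_rate N1 N2 c p * log_partition q (N1+N2) \<beta> (add_one G p))
       \<le> (\<Sum>p\<in>pairs (N1+N2). c / (2 * real (N1 + N2)) * log_partition q (N1+N2) \<beta> (add_one G p))"
proof -
  let ?P = "pairs (N1+N2)"
  define r where "r = c / (2 * real (N1 + N2))"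
  let ?d = "\<lambda>p. split_rate N1 N2 c p - r"
  let ?a = "1 - exp (-\<beta>)"
  let ?x = "\<lambda>p. gibbs_agree q (N1+N2) \<beta> G (fst p) (snd p)"
  let ?F = "log_partition q (N1+N2) \<beta>"
  have "0 \<le> (\<Sum>p\<in>?P. ?d p * ?x p ^ n)" for n
  proof -
    have "(\<lambda>i j. gibbs_agree q (N1+N2) \<beta> G i j ^ n) \<in> agreement_cone"
      by (intro agreement_cone_power gibbs_agree_in_agreement_cone assms(1))
    then show ?thesis
      using sum_mean_rate_le_split_rate_agreement_cone[OF _ assms(3-5)]
      by (simp add: r_def left_diff_distrib sum_subtractf)
  qed
  then have nonneg: "0 \<le> (\<Sum>p\<in>?P. ?d p * - ln (1 - ?a * ?x p))"
    using assms(2) gibbs_agree_bounds[OF assms(1)] by (intro sum_mult_minus_ln_one_minus_nonneg) auto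
  have "(\<Sum>p\<in>?P. r * ?F (add_one G p)) - (\<Sum>p\<in>?P. split_rate N1 N2 c p * ?F (add_one G p))
      = (\<Sum>p\<in>?P. r * (?F G + ln (1 - ?a * ?x p)))
        - (\<Sum>p\<in>?P. split_rate N1 N2 c p * (?F G + ln (1 - ?a * ?x p)))"
    using log_partition_add_one[OF _ assms(1,2)] by simp
  also have "\<dots> = ((\<Sum>p\<in>?P. r) - (\<Sum>p\<in>?P. split_rate N1 N2 c p)) * ?F G
        + (\<Sum>p\<in>?P. ?d p * - ln (1 - ?a * ?x p))"
    by (simp add: algebra_simps sum.distrib sum_subtractf sum_distrib_left sum_distrib_right)
  also have "\<dots> = (\<Sum>p\<in>?P. ?d p * - ln (1 - ?a * ?x p))"
    using sum_split_rate[OF assms(3,4), of c] by (simp add: r_def)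
  finally show ?thesis
    unfolding r_def[symmetric] using nonneg by linarith
qed

section \<open>Two decoupled systems\<close>

abbreviation shift_pair :: "nat \<Rightarrow> nat \<times> nat \<Rightarrow> nat \<times> nat" where
  "shift_pair k \<equiv> \<lambda>(i, j). (i + k, j + k)"

lemma potts_H_block_split:
  assumes "\<And>i j. i \<in> {1..N1+N2} \<Longrightarrow> j \<in> {1..N1+N2} \<Longrightarrow> (i \<le> N1) \<noteq> (j \<le> N1) \<Longrightarrow> J (i, j) = 0"
  shows "potts_H (N1+N2) \<sigma> J = potts_H N1 \<sigma> J + potts_H N2 (\<lambda>i. \<sigma> (i + N1)) (J \<circ> shift_pair N1)"
proof -
  let ?f = "\<lambda>i j. J (i, j) * (if \<sigma> i = \<sigma> j then 1 else 0)"
  let ?B = "{1+N1..N2+N1}"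
  have split: "{1..N1+N2} = {1..N1} \<union> ?B" and disj: "{1..N1} \<inter> ?B = {}"
    by auto
  have "potts_H (N1+N2) \<sigma> J
      = (\<Sum>i\<in>{1..N1}. (\<Sum>j\<in>{1..N1}. ?f i j) + (\<Sum>j\<in>?B. ?f i j))
      + (\<Sum>i\<in>?B. (\<Sum>j\<in>{1..N1}. ?f i j) + (\<Sum>j\<in>?B. ?f i j))"
    unfolding potts_H_def split by (simp only: sum.union_disjoint disj finite_atLeastAtMost sum.distrib)
  also have "\<dots> = (\<Sum>i\<in>{1..N1}. \<Sum>j\<in>{1..N1}. ?f i j) + (\<Sum>i\<in>?B. \<Sum>j\<in>?B. ?f i j)"
    using assms by (intro arg_cong2[where f="(+)"] sum.cong refl) (auto intro!: sum.neutral)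
  finally show ?thesis
    unfolding potts_H_def sum.shift_bounds_cl_nat_ivl by simp
qed

lemma bij_betw_split_configs:
  "bij_betw (\<lambda>\<sigma>. (restrict \<sigma> {1..N1}, restrict (\<lambda>i. \<sigma> (i + N1)) {1..N2}))
     (configs q (N1+N2)) (configs q N1 \<times> configs q N2)"
proof (rule bij_betw_byWitness[where f' =
    "\<lambda>(\<sigma>\<^sub>1, \<sigma>\<^sub>2). restrict (\<lambda>i. if i \<le> N1 then \<sigma>\<^sub>1 i else \<sigma>\<^sub>2 (i - N1)) {1..N1+N2}"])
  show "(\<lambda>(\<sigma>\<^sub>1, \<sigma>\<^sub>2). restrict (\<lambda>i. if i \<le> N1 then \<sigma>\<^sub>1 i else \<sigma>\<^sub>2 (i - N1)) {1..N1+N2})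
      ` (configs q N1 \<times> configs q N2) \<subseteq> configs q (N1+N2)"
  proof clarify
    fix \<sigma>\<^sub>1 \<sigma>\<^sub>2 assume "\<sigma>\<^sub>1 \<in> configs q N1" "\<sigma>\<^sub>2 \<in> configs q N2"
    moreover have "i - N1 \<in> {1..N2}" if "i \<in> {1..N1+N2}" "\<not> i \<le> N1" for i
      using that by auto
    ultimately show "restrict (\<lambda>i. if i \<le> N1 then \<sigma>\<^sub>1 i else \<sigma>\<^sub>2 (i - N1)) {1..N1+N2} \<in> configs q (N1+N2)"
      by (auto simp: configs_def PiE_iff)
  qed
qed (auto simp: configs_def fun_eq_iff PiE_def extensional_def)

lemma partition_Z_block_split:
  assumes "\<And>i j. i \<in> {1..N1+N2} \<Longrightarrow> j \<in> {1..N1+N2} \<Longrightarrow> (i \<le> N1) \<noteq> (j \<le> N1) \<Longrightarrow> J (i, j) = 0"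
  shows "partition_Z q (N1+N2) J = partition_Z q N1 J * partition_Z q N2 (J \<circ> shift_pair N1)"
proof -
  let ?h = "\<lambda>(\<sigma>\<^sub>1, \<sigma>\<^sub>2). exp (- potts_H N1 \<sigma>\<^sub>1 J) * exp (- potts_H N2 \<sigma>\<^sub>2 (J \<circ> shift_pair N1))"
  let ?split = "\<lambda>\<sigma>. (restrict \<sigma> {1..N1}, restrict (\<lambda>i. \<sigma> (i + N1)) {1..N2})"
  have "exp (- potts_H (N1+N2) \<sigma> J) = ?h (?split \<sigma>)" for \<sigma>
  proof -
    have "potts_H N1 (restrict \<sigma> {1..N1}) J = potts_H N1 \<sigma> J"
      "potts_H N2 (restrict (\<lambda>i. \<sigma> (i + N1)) {1..N2}) (J \<circ> shift_pair N1)
       = potts_H N2 (\<lambda>i. \<sigma> (i + N1)) (J \<circ> shift_pair N1)"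
      by (intro potts_H_cong; simp)+
    moreover have "potts_H (N1+N2) \<sigma> J = potts_H N1 \<sigma> J + potts_H N2 (\<lambda>i. \<sigma> (i + N1)) (J \<circ> shift_pair N1)"
      by (rule potts_H_block_split) (rule assms)
    ultimately show ?thesis
      by (simp add: exp_add[symmetric])
  qed
  then have "partition_Z q (N1+N2) J = (\<Sum>\<sigma>\<in>configs q (N1+N2). ?h (?split \<sigma>))"
    unfolding partition_Z_def by simp
  also have "\<dots> = (\<Sum>x\<in>configs q N1 \<times> configs q N2. ?h x)"
    by (rule sum.reindex_bij_betw[OF bij_betw_split_configs])
  also have "\<dots> = partition_Z q N1 J * partition_Z q N2 (J \<circ> shift_pair N1)"
    unfolding partition_Z_def by (simp add: sum_product sum.cartesian_product)
  finally show ?thesis .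
qed

abbreviation upper_block :: "nat \<Rightarrow> nat \<Rightarrow> (nat \<times> nat) set" where
  "upper_block N1 N2 \<equiv> {N1+1..N1+N2} \<times> {N1+1..N1+N2}"

lemma log_partition_join:
  assumes "q \<ge> 1" "\<And>p. p \<notin> upper_block N1 N2 \<Longrightarrow> G\<^sub>2 p = 0"
  shows "log_partition q (N1+N2) \<beta> (\<lambda>p. if p \<in> pairs N1 then G\<^sub>1 p else G\<^sub>2 p)
       = log_partition q N1 \<beta> G\<^sub>1 + log_partition q N2 \<beta> (G\<^sub>2 \<circ> shift_pair N1)"
proof -
  let ?J = "\<lambda>p. \<beta> * real (if p \<in> pairs N1 then G\<^sub>1 p else G\<^sub>2 p)"
  have "partition_Z q (N1+N2) ?J = partition_Z q N1 ?J * partition_Z q N2 (?J \<circ> shift_pair N1)"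
    by (rule partition_Z_block_split) (use assms(2) in auto)
  moreover have "partition_Z q N1 ?J = partition_Z q N1 (\<lambda>p. \<beta> * real (G\<^sub>1 p))"
    by (rule partition_Z_cong) auto
  moreover have "partition_Z q N2 (?J \<circ> shift_pair N1) = partition_Z q N2 (\<lambda>p. \<beta> * real ((G\<^sub>2 \<circ> shift_pair N1) p))"
    by (rule partition_Z_cong) auto
  moreover have "partition_Z q N J \<noteq> 0" for N J
    using partition_Z_pos[OF assms(1)] by (simp add: less_imp_neq[symmetric])
  ultimately show ?thesis
    unfolding log_partition_def by (simp add: ln_mult)
qed

lemma poisson_field_split_rate:
  "poisson_field (pairs (N1+N2)) (split_rate N1 N2 c)
   = map_pmf (\<lambda>(G\<^sub>1, G\<^sub>2) p. if p \<in> pairs N1 then G\<^sub>1 p else G\<^sub>2 p)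
       (pair_pmf (J_law N1 c) (poisson_field (upper_block N1 N2) (\<lambda>_. c / (2 * real N2))))"
proof -
  let ?\<mu> = "\<lambda>p. poisson_mean (split_rate N1 N2 c p)"
  have "poisson_field (pairs (N1+N2)) (split_rate N1 N2 c) = Pi_pmf (pairs N1 \<union> upper_block N1 N2) 0 ?\<mu>"
    unfolding poisson_field_def
    by (rule Pi_pmf_subset') (auto simp: split_rate_def poisson_mean_def)
  also have "\<dots> = map_pmf (\<lambda>(G\<^sub>1, G\<^sub>2) p. if p \<in> pairs N1 then G\<^sub>1 p else G\<^sub>2 p)
      (pair_pmf (Pi_pmf (pairs N1) 0 ?\<mu>) (Pi_pmf (upper_block N1 N2) 0 ?\<mu>))"
    by (rule Pi_pmf_union) auto
  also have "Pi_pmf (pairs N1) 0 ?\<mu> = J_law N1 c"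
    unfolding J_law_def by (intro Pi_pmf_cong) (auto simp: split_rate_def)
  also have "Pi_pmf (upper_block N1 N2) 0 ?\<mu> = poisson_field (upper_block N1 N2) (\<lambda>_. c / (2 * real N2))"
    unfolding poisson_field_def by (intro Pi_pmf_cong) (auto simp: split_rate_def)
  finally show ?thesis .
qed

lemma J_law_eq_map_shift:
  "J_law N2 c = map_pmf (\<lambda>G. G \<circ> shift_pair N1) (poisson_field (upper_block N1 N2) (\<lambda>_. c / (2 * real N2)))"
proof -
  have "bij_betw (shift_pair N1) (pairs N2) (upper_block N1 N2)"
    by (rule bij_betw_byWitness[where f' = "\<lambda>(i, j). (i - N1, j - N1)"])
       (auto simp: image_iff intro!: bexI[of _ "(_ - N1, _ - N1)"])
  then show ?thesis
    unfolding J_law_def poisson_field_def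
    by (rule Pi_pmf_bij_betw[OF finite_SigmaI[OF finite_atLeastAtMost finite_atLeastAtMost]]) auto
qed

lemma expectation_pair_pmf_add:
  fixes f g :: "_ \<Rightarrow> real"
  assumes "integrable (measure_pmf A) f" "integrable (measure_pmf B) g"
  shows "measure_pmf.expectation (pair_pmf A B) (\<lambda>x. f (fst x) + g (snd x))
       = measure_pmf.expectation A f + measure_pmf.expectation B g"
proof -
  have "integrable (measure_pmf (pair_pmf A B)) (\<lambda>x. f (fst x))"
    using assms(1) integrable_map_pmf_eq[of fst "pair_pmf A B" f] by (simp add: map_fst_pair_pmf)
  moreover have "integrable (measure_pmf (pair_pmf A B)) (\<lambda>x. g (snd x))"
    using assms(2) integrable_map_pmf_eq[of snd "pair_pmf A B" g] by (simp add: map_snd_pair_pmf)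
  ultimately show ?thesis
    by (simp add: Bochner_Integration.integral_add expectation_pair_pmf_fst expectation_pair_pmf_snd)
qed

lemma expectation_log_partition_split_rate:
  assumes "q \<ge> 1" "\<beta> \<ge> 0" "c \<ge> 0"
  shows "measure_pmf.expectation (poisson_field (pairs (N1+N2)) (split_rate N1 N2 c)) (log_partition q (N1+N2) \<beta>)
       = measure_pmf.expectation (J_law N1 c) (log_partition q N1 \<beta>)
       + measure_pmf.expectation (J_law N2 c) (log_partition q N2 \<beta>)"
proof -
  let ?D = "poisson_field (upper_block N1 N2) (\<lambda>_. c / (2 * real N2))"
  let ?F\<^sub>1 = "log_partition q N1 \<beta>" and ?F\<^sub>2 = "\<lambda>G. log_partition q N2 \<beta> (G \<circ> shift_pair N1)"
  have integrable: "integrable (measure_pmf (J_law N c)) (log_partition q N \<beta>)" for N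
    by (rule integrable_log_partition[OF assms])
  have integrable_F2: "integrable (measure_pmf ?D) ?F\<^sub>2"
    using integrable[of N2] unfolding J_law_eq_map_shift[of N2 c N1] by simp
  have integrable_F1: "integrable (measure_pmf (J_law N1 c)) ?F\<^sub>1"
    by (rule integrable)
  have join: "\<forall>x\<in>set_pmf (pair_pmf (J_law N1 c) ?D).
      log_partition q (N1+N2) \<beta> ((\<lambda>(G\<^sub>1, G\<^sub>2) p. if p \<in> pairs N1 then G\<^sub>1 p else G\<^sub>2 p) x)
      = ?F\<^sub>1 (fst x) + ?F\<^sub>2 (snd x)"
  proof
    fix x assume x: "x \<in> set_pmf (pair_pmf (J_law N1 c) ?D)"
    obtain G\<^sub>1 G\<^sub>2 where x_eq: "x = (G\<^sub>1, G\<^sub>2)" by (cases x)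
    have "G\<^sub>2 \<in> set_pmf ?D" using x unfolding x_eq by simp
    then have "G\<^sub>2 p = 0" if "p \<notin> upper_block N1 N2" for p
      using set_Pi_pmf_subset[of "upper_block N1 N2" 0] that unfolding poisson_field_def by blast
    then show "log_partition q (N1+N2) \<beta> ((\<lambda>(G\<^sub>1, G\<^sub>2) p. if p \<in> pairs N1 then G\<^sub>1 p else G\<^sub>2 p) x)
        = ?F\<^sub>1 (fst x) + ?F\<^sub>2 (snd x)"
      unfolding x_eq prod.case fst_conv snd_conv by (rule log_partition_join[OF assms(1)])
  qed
  have "measure_pmf.expectation (poisson_field (pairs (N1+N2)) (split_rate N1 N2 c)) (log_partition q (N1+N2) \<beta>)
      = measure_pmf.expectation (pair_pmf (J_law N1 c) ?D) (\<lambda>x. ?F\<^sub>1 (fst x) + ?F\<^sub>2 (snd x))"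
    unfolding poisson_field_split_rate integral_map_pmf
    using join by (intro integral_cong_AE) (auto simp: AE_measure_pmf_iff)
  also have "\<dots> = measure_pmf.expectation (J_law N1 c) ?F\<^sub>1 + measure_pmf.expectation ?D ?F\<^sub>2"
    by (intro expectation_pair_pmf_add integrable_F1 integrable_F2)
  finally show ?thesis
    unfolding J_law_eq_map_shift[of N2 c N1] by simp
qed

theorem mainTheorem3:
  fixes q N1 N2 :: nat and \<beta> c :: real
  assumes "q \<ge> 2" and "\<beta> \<ge> 0" and "c \<ge> 0" and "N1 \<ge> 1" and "N2 \<ge> 1"
  shows "pressure q (N1 + N2) \<beta> c \<ge>
           real N1 / real (N1 + N2) * pressure q N1 \<beta> c
         + real N2 / real (N1 + N2) * pressure q N2 \<beta> c"
proof -
  have q: "q \<ge> 1" using assms(1) by simp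
  let ?E = "\<lambda>N. measure_pmf.expectation (J_law N c) (log_partition q N \<beta>)"
  have "?E N1 + ?E N2
      = measure_pmf.expectation (poisson_field (pairs (N1+N2)) (split_rate N1 N2 c)) (log_partition q (N1+N2) \<beta>)"
    using expectation_log_partition_split_rate[OF q assms(2,3)] by simp
  also have "\<dots> \<le> ?E (N1 + N2)"
    unfolding J_law_eq_poisson_field
  proof (rule poisson_field_expectation_le)
    show "\<bar>log_partition q (N1+N2) \<beta> G\<bar> \<le> real (N1+N2) * ln (real q) + \<beta> * real (\<Sum>p\<in>pairs (N1+N2). G p)" for G
      by (rule abs_log_partition_le[OF q assms(2)])
  qed (use assms q sum_split_rate sum_split_rate_log_partition_le split_rate_nonneg in auto)
  finally have "?E N1 + ?E N2 \<le> ?E (N1 + N2)" .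
  then show ?thesis
    using assms(4,5) by (simp add: pressure_eq_expectation_log_partition add_divide_distrib[symmetric] divide_right_mono)
qed

end
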